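(* Let $\boldsymbol{\mathcal{D}} = \begin{pmatrix}\boldsymbol{W}_p\\ \boldsymbol{U}_f \\ \boldsymbol{Y}_f\end{pmatrix}$ be a data matrix with full row rank and LQ decomposition as described in the context, let $\boldsymbol{Z}:=\begin{pmatrix}\boldsymbol{W}_p\\ \boldsymbol{U}_f\end{pmatrix}$, $\boldsymbol{\Pi}:=\boldsymbol{Z}^+\boldsymbol{Z}$, $\boldsymbol{\Pi}_\perp:=\boldsymbol{I}-\boldsymbol{\Pi}$, and $\lambda_a>0$. Then DeePC with regularization $h(\boldsymbol{a}) = \lambda_a \|\boldsymbol{\Pi}_\perp\boldsymbol{a}\|_2^2$ is equivalent to $\boldsymbol{\gamma}$-DDPC with regularization $\tilde h(\boldsymbol{\gamma}) = \lambda_a \|\boldsymbol{\gamma}_3\|_2^2$.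
   Context: $\boldsymbol{Z}^+$ denotes the Moore–Penrose pseudoinverse. Data: $m$ inputs, $p$ outputs, past horizon $N_p$, future horizon $N_f$, $L=N_p+N_f$, and $\ell$ data trajectories. The data matrix $\boldsymbol{\mathcal{D}}\in\mathbb{R}^{L(m+p)\times\ell}$ has blocks $\boldsymbol{W}_p\in\mathbb{R}^{N_p(m+p)\times\ell}$ (past inputs and outputs), $\boldsymbol{U}_f\in\mathbb{R}^{mN_f\times \ell}$, $\boldsymbol{Y}_f\in\mathbb{R}^{pN_f\times\ell}$ and is assumed to have full row rank. Its LQ decomposition is $\boldsymbol{\mathcal{D}} = \begin{pmatrix} \boldsymbol{L}_{11} & \boldsymbol{0} & \boldsymbol{0} & \boldsymbol{0} \\ \boldsymbol{L}_{21} & \boldsymbol{L}_{22} & \boldsymbol{0} & \boldsymbol{0} \\ \boldsymbol{L}_{31} & \boldsymbol{L}_{32} & \boldsymbol{L}_{33} & \boldsymbol{0} \end{pmatrix}\begin{pmatrix}\boldsymbol{Q}_1\\ \boldsymbol{Q}_2\\ \boldsymbol{Q}_3\\ \boldsymbol{Q}_4\end{pmatrix}$, with non-singular square diagonal blocks $\boldsymbol{L}_{11},\boldsymbol{L}_{22},\boldsymbol{L}_{33}$ (of sizes matching $\boldsymbol{W}_p,\boldsymbol{U}_f,\boldsymbol{Y}_f$) and $\boldsymbol{Q}=\begin{pmatrix}\boldsymbol{Q}_1^\top & \boldsymbol{Q}_2^\top&\boldsymbol{Q}_3^\top&\boldsymbol{Q}_4^\top\end{pmatrix}^\top\in\mathbb{R}^{\ell\times\ell}$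 orthogonal; $\boldsymbol{\gamma}_i := \boldsymbol{Q}_i\boldsymbol{a}$. Given current past I/O data $\boldsymbol{\xi}\in\mathbb{R}^{N_p(m+p)}$, a cost $J(\boldsymbol{\xi},\mathbf{u}_f,\mathbf{y}_f)$ and constraint sets $\mathcal{U}$, $\mathcal{Y}$: DeePC with regularization $h$ is the problem $\min_{\mathbf{u}_f,\mathbf{y}_f,\boldsymbol{a}} J(\boldsymbol{\xi},\mathbf{u}_f,\mathbf{y}_f)+h(\boldsymbol{a})$ s.t. $(\boldsymbol{\xi};\mathbf{u}_f;\mathbf{y}_f)=\boldsymbol{\mathcal{D}}\boldsymbol{a}$, $(\mathbf{u}_f,\mathbf{y}_f)\in\mathcal{U}\times\mathcal{Y}$. $\boldsymbol{\gamma}$-DDPC with regularization $\tilde h$ is the problem $\min_{\mathbf{u}_f,\mathbf{y}_f,\boldsymbol{\gamma}_2,\boldsymbol{\gamma}_3} J(\boldsymbol{\xi},\mathbf{u}_f,\mathbf{y}_f)+\tilde h(\boldsymbol{\gamma})$ s.t. $\boldsymbol{\gamma}_1=\boldsymbol{L}_{11}^{-1}\boldsymbol{\xi}$, $\mathbf{u}_f = \boldsymbol{L}_{21}\boldsymbol{\gamma}_1+\boldsymbol{L}_{22}\boldsymbol{\gamma}_2$, $\mathbf{y}_f=\boldsymbol{L}_{31}\boldsymbol{\gamma}_1+\boldsymbol{L}_{32}\boldsymbol{\gamma}_2+\boldsymbol{L}_{33}\boldsymbol{\gamma}_3$, $(\mathbf{u}_f,\mathbf{y}_f)\in\mathcal{U}\times\mathcal{Y}$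 (i.e., $\boldsymbol{\gamma}_4=\boldsymbol{0}$ is fixed). Two such optimal control problems are called equivalent if, for every $\boldsymbol{\xi}$, they yield the same optimal predicted input/output trajectories $(\mathbf{u}_f^\ast,\mathbf{y}_f^\ast)$ (not necessarily the same optimal cost). *)

theory Defs
  imports "Jordan_Normal_Form.DL_Rank"
begin

definition inv_mat :: "real mat \<Rightarrow> real mat" where
  "inv_mat A = (THE B. B \<in> carrier_mat (dim_row A) (dim_row A) \<and>
       A * B = 1\<^sub>m (dim_row A) \<and> B * A = 1\<^sub>m (dim_row A))"

definition pinv :: "real mat \<Rightarrow> real mat" where
  "pinv Z = (THE X. X \<in> carrier_mat (dim_col Z) (dim_row Z) \<and>
       Z * X * Z = Z \<and> X * Z * X = X \<and>
       transpose_mat (Z * X) = Z * X \<and> transpose_mat (X * Z) = X * Z)"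

definition full_row_rank :: "real mat \<Rightarrow> bool" where
  "full_row_rank A \<longleftrightarrow> vec_space.rank (dim_row A) A = dim_row A"

definition sqnorm :: "real vec \<Rightarrow> real" where
  "sqnorm v = v \<bullet> v"

text \<open>Generic notion: the set of optimal predicted input/output trajectories of an
  optimal control problem with decision variables (u, y, z), where z collects the
  auxiliary variables, feasibility predicate F and cost C.\<close>
definition opt_io :: "('u \<Rightarrow> 'y \<Rightarrow> 'z \<Rightarrow> bool) \<Rightarrow> ('u \<Rightarrow> 'y \<Rightarrow> 'z \<Rightarrow> real) \<Rightarrow> ('u \<times> 'y) set" where
  "opt_io F C = {(u, y). \<exists>z. F u y z \<and>
       (\<forall>u' y' z'. F u' y' z' \<longrightarrow> C u y z \<le> C u' y' z')}"

definition deepc_opt_io ::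
  "real mat \<Rightarrow> nat \<Rightarrow> nat \<Rightarrow> (real vec \<Rightarrow> real vec \<Rightarrow> real vec \<Rightarrow> real) \<Rightarrow> (real vec \<Rightarrow> real)
   \<Rightarrow> real vec set \<Rightarrow> real vec set \<Rightarrow> real vec \<Rightarrow> (real vec \<times> real vec) set" where
  "deepc_opt_io D nu ny J h UU YY \<xi> =
     opt_io (\<lambda>u y a. u \<in> carrier_vec nu \<and> y \<in> carrier_vec ny \<and> a \<in> carrier_vec (dim_col D) \<and>
                     \<xi> @\<^sub>v u @\<^sub>v y = D *\<^sub>v a \<and> u \<in> UU \<and> y \<in> YY)
            (\<lambda>u y a. J \<xi> u y + h a)"

text \<open>gamma-DDPC: decision variables u_f, y_f, gamma_2, gamma_3 (gamma_4 = 0 fixed);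
  gamma_1 = L11^{-1} xi; cost J(xi,u_f,y_f) + htilde(gamma_1,gamma_2,gamma_3).\<close>
definition gddpc_opt_io ::
  "real mat \<Rightarrow> real mat \<Rightarrow> real mat \<Rightarrow> real mat \<Rightarrow> real mat \<Rightarrow> real mat
   \<Rightarrow> (real vec \<Rightarrow> real vec \<Rightarrow> real vec \<Rightarrow> real)
   \<Rightarrow> (real vec \<Rightarrow> real vec \<Rightarrow> real vec \<Rightarrow> real)
   \<Rightarrow> real vec set \<Rightarrow> real vec set \<Rightarrow> real vec \<Rightarrow> (real vec \<times> real vec) set" where
  "gddpc_opt_io L11 L21 L22 L31 L32 L33 J ht UU YY \<xi> =
     (let \<gamma>1 = inv_mat L11 *\<^sub>v \<xi> in
      opt_io (\<lambda>u y (\<gamma>2, \<gamma>3). \<gamma>2 \<in> carrier_vec (dim_col L22) \<and> \<gamma>3 \<in> carrier_vec (dim_col L33) \<and>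
                     u = L21 *\<^sub>v \<gamma>1 + L22 *\<^sub>v \<gamma>2 \<and>
                     y = L31 *\<^sub>v \<gamma>1 + L32 *\<^sub>v \<gamma>2 + L33 *\<^sub>v \<gamma>3 \<and> u \<in> UU \<and> y \<in> YY)
             (\<lambda>u y (\<gamma>2, \<gamma>3). J \<xi> u y + ht \<gamma>1 \<gamma>2 \<gamma>3))"

end

theory Submission
  imports Defs
begin

(* In the coordinates gamma = Q a of the orthogonal factor, the DeePC constraint
   (xi; u; y) = D a reads xi = L11 gamma1, u = L21 gamma1 + L22 gamma2,
   y = L31 gamma1 + L32 gamma2 + L33 gamma3, with gamma4 unconstrained.
   Since Z = [L11 0; L21 L22] (Q1; Q2) with an invertible factor and orthonormal rows,
   Z^+ Z = (Q1; Q2)^T (Q1; Q2) and ||Pi_perp a||^2 = ||gamma3||^2 + ||gamma4||^2.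
   Hence each DeePC-feasible a yields a gamma-DDPC-feasible (gamma2, gamma3) with the
   same (u, y) and no larger cost, and conversely a = Q^T (gamma1; gamma2; gamma3; 0)
   realizes each gamma-DDPC-feasible point at equal cost, so both problems have the
   same optimal predicted trajectories. *)

lemma dim_append_rows[simp]:
  "dim_row (A @\<^sub>r B) = dim_row A + dim_row B"
  "dim_col (A @\<^sub>r B) = dim_col A"
  unfolding append_rows_def by auto

lemma index_append_rows[simp]:
  "i < dim_row A + dim_row B \<Longrightarrow> j < dim_col A \<Longrightarrow>
   (A @\<^sub>r B) $$ (i, j) = (if i < dim_row A then A $$ (i, j) else B $$ (i - dim_row A, j))"
  unfolding append_rows_def by auto

lemma row_append_rows:
  assumes "dim_col B = dim_col A" "i < dim_row A + dim_row B"
  shows "row (A @\<^sub>r B) i = (if i < dim_row A then row A i else row B (i - dim_row A))"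
  using assms by (intro eq_vecI) auto

lemma col_append_rows:
  assumes "dim_col B = dim_col A" "j < dim_col A"
  shows "col (A @\<^sub>r B) j = col A j @\<^sub>v col B j"
  using assms by (intro eq_vecI) auto

lemma append_rows_eq_iff:
  assumes "A \<in> carrier_mat k1 n" "A' \<in> carrier_mat k1 n" "B \<in> carrier_mat k2 n" "B' \<in> carrier_mat k2 n"
  shows "A @\<^sub>r B = A' @\<^sub>r B' \<longleftrightarrow> A = A' \<and> B = B'"
proof
  assume eq: "A @\<^sub>r B = A' @\<^sub>r B'"
  have "A $$ (i, j) = A' $$ (i, j)" if "i < k1" "j < n" for i j
    using arg_cong[OF eq, of "\<lambda>M. M $$ (i, j)"] that assms by simp
  moreover have "B $$ (i, j) = B' $$ (i, j)" if "i < k2" "j < n" for i j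
    using arg_cong[OF eq, of "\<lambda>M. M $$ (k1 + i, j)"] that assms by simp
  ultimately show "A = A' \<and> B = B'"
    using assms by auto
qed simp

lemma append_rows_assoc:
  assumes "A \<in> carrier_mat k1 n" "B \<in> carrier_mat k2 n" "C \<in> carrier_mat k3 n"
  shows "(A @\<^sub>r B) @\<^sub>r C = A @\<^sub>r B @\<^sub>r C"
  using assms by (intro eq_matI) auto

lemma append_rows_mult:
  assumes "A \<in> carrier_mat k1 n" "B \<in> carrier_mat k2 n" "P \<in> carrier_mat n m"
  shows "(A @\<^sub>r B) * P = A * P @\<^sub>r B * P"
  using assms by (intro eq_matI) (auto simp: row_append_rows)

lemma add_append_rows:
  assumes "A \<in> carrier_mat k1 n" "B \<in> carrier_mat k2 n" "C \<in> carrier_mat k1 n" "D \<in> carrier_mat k2 n"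
  shows "(A @\<^sub>r B) + (C @\<^sub>r D) = (A + C) @\<^sub>r (B + D)"
  using assms by (intro eq_matI) auto

lemma lower_four_block_mult_append_rows:
  assumes "A \<in> carrier_mat k1 m1" "C \<in> carrier_mat k2 m1" "D \<in> carrier_mat k2 m2"
    "P \<in> carrier_mat m1 n" "R \<in> carrier_mat m2 n"
  shows "four_block_mat A (0\<^sub>m k1 m2) C D * (P @\<^sub>r R) = A * P @\<^sub>r (C * P + D * R)"
  using assms unfolding append_rows_def
  by (subst mult_four_block_mat[of _ k1 m1 _ m2 _ k2 _ _ n _ 0]) auto

lemma transpose_append_rows_mult_vec:
  fixes A B :: "'a :: comm_ring_1 mat"
  assumes "A \<in> carrier_mat k1 n" "B \<in> carrier_mat k2 n" "u \<in> carrier_vec k1" "w \<in> carrier_vec k2"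
  shows "transpose_mat (A @\<^sub>r B) *\<^sub>v (u @\<^sub>v w) = transpose_mat A *\<^sub>v u + transpose_mat B *\<^sub>v w"
  using assms by (intro eq_vecI) (auto simp: col_append_rows intro!: scalar_prod_append[of _ k1 _ k2])

lemma append_rows_orthonormal_rowsD:
  assumes A: "A \<in> carrier_mat k1 n" and B: "B \<in> carrier_mat k2 n"
    and orth: "(A @\<^sub>r B) * transpose_mat (A @\<^sub>r B) = 1\<^sub>m (k1 + k2)"
  shows "A * transpose_mat A = 1\<^sub>m k1" "B * transpose_mat B = 1\<^sub>m k2"
proof -
  have entry: "row (A @\<^sub>r B) i \<bullet> row (A @\<^sub>r B) j = (if i = j then 1 else 0)"
    if "i < k1 + k2" "j < k1 + k2" for i j
    using arg_cong[OF orth, of "\<lambda>M. M $$ (i, j)"] that A B by simp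
  show "A * transpose_mat A = 1\<^sub>m k1"
  proof (rule eq_matI)
    fix i j assume "i < dim_row (1\<^sub>m k1)" "j < dim_col (1\<^sub>m k1)"
    then show "(A * transpose_mat A) $$ (i, j) = 1\<^sub>m k1 $$ (i, j)"
      using entry[of i j] A B by (simp add: row_append_rows)
  qed (use A in auto)
  show "B * transpose_mat B = 1\<^sub>m k2"
  proof (rule eq_matI)
    fix i j assume "i < dim_row (1\<^sub>m k2)" "j < dim_col (1\<^sub>m k2)"
    then show "(B * transpose_mat B) $$ (i, j) = 1\<^sub>m k2 $$ (i, j)"
      using entry[of "k1 + i" "k1 + j"] A B by (simp add: row_append_rows)
  qed (use B in auto)
qed

lemma sqnorm_nonneg: "0 \<le> sqnorm v"
  unfolding sqnorm_def scalar_prod_def by (auto intro: sum_nonneg)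

lemma sqnorm_append:
  "u \<in> carrier_vec n1 \<Longrightarrow> w \<in> carrier_vec n2 \<Longrightarrow> sqnorm (u @\<^sub>v w) = sqnorm u + sqnorm w"
  unfolding sqnorm_def by (rule scalar_prod_append)

lemma sqnorm_transpose_mult_vec:
  assumes Q: "Q \<in> carrier_mat k n" and orth: "Q * transpose_mat Q = 1\<^sub>m k" and v: "v \<in> carrier_vec k"
  shows "sqnorm (transpose_mat Q *\<^sub>v v) = sqnorm v"
proof -
  have "sqnorm (transpose_mat Q *\<^sub>v v) = v \<bullet> (Q *\<^sub>v (transpose_mat Q *\<^sub>v v))"
    unfolding sqnorm_def using Q v by (intro transpose_vec_mult_scalar) auto
  also have "Q *\<^sub>v (transpose_mat Q *\<^sub>v v) = v"
    using Q v orth by (simp flip: assoc_mult_mat_vec[of _ k n _ k])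
  finally show ?thesis unfolding sqnorm_def .
qed

lemma inv_mat_inverse:
  assumes A: "A \<in> carrier_mat n n" and inv: "invertible_mat A"
  shows "inv_mat A \<in> carrier_mat n n" "A * inv_mat A = 1\<^sub>m n" "inv_mat A * A = 1\<^sub>m n"
proof -
  obtain B where AB: "A * B = 1\<^sub>m n" and BA: "B * A = 1\<^sub>m (dim_row B)"
    using inv A unfolding invertible_mat_def inverts_mat_def by auto
  have B: "B \<in> carrier_mat n n"
    using arg_cong[OF AB, of dim_col] arg_cong[OF BA, of dim_col] A by auto
  have "inv_mat A = B"
    unfolding inv_mat_def
  proof (rule the_equality)
    fix B' assume "B' \<in> carrier_mat (dim_row A) (dim_row A) \<and> A * B' = 1\<^sub>m (dim_row A) \<and> B' * A = 1\<^sub>m (dim_row A)"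
    then have B': "B' \<in> carrier_mat n n" "B' * A = 1\<^sub>m n" using A by auto
    have "B' = B' * (A * B)" using AB B' by simp
    also have "\<dots> = (B' * A) * B" using A B B'(1) by simp
    also have "\<dots> = B" using B'(2) B by (metis left_mult_one_mat)
    finally show "B' = B" .
  qed (use A B AB BA in auto)
  then show "inv_mat A \<in> carrier_mat n n" "A * inv_mat A = 1\<^sub>m n" "inv_mat A * A = 1\<^sub>m n"
    using B AB BA by auto
qed

lemma invertible_mat_det_nonzero:
  fixes A :: "real mat"
  assumes "A \<in> carrier_mat n n" "invertible_mat A"
  shows "det A \<noteq> 0"
proof -
  have "det A * det (inv_mat A) = 1"
    using det_mult[OF assms(1) inv_mat_inverse(1)[OF assms]] inv_mat_inverse(2)[OF assms] by simp
  then show ?thesis by auto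
qed

definition penrose_inverse :: "real mat \<Rightarrow> real mat \<Rightarrow> bool" where
  "penrose_inverse Z X \<longleftrightarrow> X \<in> carrier_mat (dim_col Z) (dim_row Z) \<and>
     Z * X * Z = Z \<and> X * Z * X = X \<and>
     transpose_mat (Z * X) = Z * X \<and> transpose_mat (X * Z) = X * Z"

lemma penrose_inverse_unique:
  assumes PX: "penrose_inverse Z X" and PY: "penrose_inverse Z Y"
  shows "X = Y"
proof -
  obtain m n where Z: "Z \<in> carrier_mat m n" by blast
  have X: "X \<in> carrier_mat n m" and Y: "Y \<in> carrier_mat n m"
    using PX PY Z unfolding penrose_inverse_def by auto
  have XZ_carrier: "X * Z \<in> carrier_mat n n" "Y * Z \<in> carrier_mat n n"
    and ZX_carrier: "Z * X \<in> carrier_mat m m" "Z * Y \<in> carrier_mat m m"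
    using X Y Z by auto
  have ZXZ: "Z * (X * Z) = Z" and ZYZ: "Z * (Y * Z) = Z"
    and XZX: "X * (Z * X) = X" and YZY: "Y * (Z * Y) = Y"
    and tXZ: "transpose_mat (X * Z) = X * Z" and tYZ: "transpose_mat (Y * Z) = Y * Z"
    and tZX: "transpose_mat (Z * X) = Z * X" and tZY: "transpose_mat (Z * Y) = Z * Y"
    using PX PY X Y Z unfolding penrose_inverse_def by auto
  have "X * Z = X * (Z * (Y * Z))"
    by (simp only: ZYZ)
  also have "\<dots> = transpose_mat (X * Z) * transpose_mat (Y * Z)"
    unfolding tXZ tYZ using assoc_mult_mat[OF X Z XZ_carrier(2)] ..
  also have "\<dots> = transpose_mat (Y * (Z * (X * Z)))"
    unfolding transpose_mult[OF XZ_carrier(2,1), symmetric] assoc_mult_mat[OF Y Z XZ_carrier(1)] ..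
  finally have XZ: "X * Z = Y * Z"
    by (simp only: ZXZ tYZ)
  have "Z * X = (Z * Y * Z) * X"
    using PY unfolding penrose_inverse_def by simp
  also have "\<dots> = transpose_mat (Z * Y) * transpose_mat (Z * X)"
    unfolding tZX tZY using assoc_mult_mat[OF ZX_carrier(2) Z X] .
  also have "\<dots> = transpose_mat (Z * X * Z * Y)"
    unfolding transpose_mult[OF ZX_carrier, symmetric] assoc_mult_mat[OF ZX_carrier(1) Z Y] ..
  finally have ZX: "Z * X = Z * Y"
    using PX unfolding penrose_inverse_def by (simp only: tZY)
  have "X = X * (Z * X)" using XZX ..
  also have "\<dots> = Y * (Z * Y)"
    unfolding ZX assoc_mult_mat[OF X Z Y, symmetric] XZ assoc_mult_mat[OF Y Z Y] ..
  also have "\<dots> = Y" using YZY .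
  finally show ?thesis .
qed

lemma pinv_eqI:
  assumes "penrose_inverse Z X"
  shows "pinv Z = X"
proof -
  have "pinv Z = (THE X. penrose_inverse Z X)"
    unfolding pinv_def penrose_inverse_def ..
  then show ?thesis
    using assms penrose_inverse_unique by (auto intro: the_equality)
qed

lemma pinv_mult_self_of_orthonormal_rows:
  fixes L Q :: "real mat"
  assumes L: "L \<in> carrier_mat k k" and det: "det L \<noteq> 0"
    and Q: "Q \<in> carrier_mat k n" and orth: "Q * transpose_mat Q = 1\<^sub>m k"
  shows "pinv (L * Q) * (L * Q) = transpose_mat Q * Q"
proof -
  obtain M where M: "M \<in> carrier_mat k k" and M_L: "M * L = 1\<^sub>m k" and L_M: "L * M = 1\<^sub>m k"
    using det_non_zero_imp_unit[OF L det, of "()"] unfolding Units_def ring_mat_def by auto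
  define X where "X = transpose_mat Q * M"
  have Qt: "transpose_mat Q \<in> carrier_mat n k" and X: "X \<in> carrier_mat n k"
    using Q M unfolding X_def by auto
  have LQ: "L * Q \<in> carrier_mat k n"
    using L Q by auto
  have right_inverse: "(L * Q) * X = 1\<^sub>m k"
    unfolding X_def assoc_mult_mat[OF L Q X[unfolded X_def]] assoc_mult_mat[OF Q Qt M, symmetric]
    using orth M L_M by simp
  have left: "X * (L * Q) = transpose_mat Q * Q"
    unfolding X_def assoc_mult_mat[OF Qt M LQ] assoc_mult_mat[OF M L Q, symmetric]
    using M_L Q by simp
  have "penrose_inverse (L * Q) X"
    unfolding penrose_inverse_def
  proof (intro conjI)
    show "X * (L * Q) * X = X"
      unfolding left unfolding X_def
        assoc_mult_mat[OF Qt Q X[unfolded X_def]] assoc_mult_mat[OF Q Qt M, symmetric]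
      using orth M by simp
  qed (use L Q X LQ right_inverse left in \<open>auto simp: transpose_mult[OF Qt Q]\<close>)
  then show ?thesis
    using pinv_eqI left by simp
qed

lemma opt_io_subset:
  assumes "\<And>u y z. F u y z \<Longrightarrow> \<exists>z'. F' u y z' \<and> C' u y z' \<le> C u y z"
    and "\<And>u y z'. F' u y z' \<Longrightarrow> \<exists>z. F u y z \<and> C u y z \<le> C' u y z'"
  shows "opt_io F C \<subseteq> opt_io F' C'"
proof
  fix p assume "p \<in> opt_io F C"
  then obtain u y z where p: "p = (u, y)" and F: "F u y z"
    and opt: "\<And>u' y' z'. F u' y' z' \<Longrightarrow> C u y z \<le> C u' y' z'"
    unfolding opt_io_def by auto
  obtain z' where F': "F' u y z'" and le: "C' u y z' \<le> C u y z"
    using assms(1)[OF F] by blast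
  have "C' u y z' \<le> C' u' y' w'" if F'': "F' u' y' w'" for u' y' w'
  proof -
    obtain w where "F u' y' w" "C u' y' w \<le> C' u' y' w'"
      using assms(2)[OF F''] by blast
    then show ?thesis
      using le opt by (meson order_trans)
  qed
  then show "p \<in> opt_io F' C'"
    unfolding opt_io_def p using F' by auto
qed

lemma opt_io_eqI:
  assumes "\<And>u y z. F u y z \<Longrightarrow> \<exists>z'. F' u y z' \<and> C' u y z' \<le> C u y z"
    and "\<And>u y z'. F' u y z' \<Longrightarrow> \<exists>z. F u y z \<and> C u y z \<le> C' u y z'"
  shows "opt_io F C = opt_io F' C'"
  using opt_io_subset[of F F' C' C] opt_io_subset[of F' F C C'] assms by blast

locale lq_factorization =
  fixes n1 n2 n3 n4 l :: nat
    and Wp Uf Yf L11 L21 L22 L31 L32 L33 Q1 Q2 Q3 Q4 :: "real mat"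
  assumes Wp: "Wp \<in> carrier_mat n1 l" and Uf: "Uf \<in> carrier_mat n2 l" and Yf: "Yf \<in> carrier_mat n3 l"
    and L11: "L11 \<in> carrier_mat n1 n1" and L21: "L21 \<in> carrier_mat n2 n1" and L22: "L22 \<in> carrier_mat n2 n2"
    and L31: "L31 \<in> carrier_mat n3 n1" and L32: "L32 \<in> carrier_mat n3 n2" and L33: "L33 \<in> carrier_mat n3 n3"
    and inv11: "invertible_mat L11" and inv22: "invertible_mat L22"
    and Q1: "Q1 \<in> carrier_mat n1 l" and Q2: "Q2 \<in> carrier_mat n2 l" and Q3: "Q3 \<in> carrier_mat n3 l"
    and Q4: "Q4 \<in> carrier_mat n4 l"
    and orth1: "transpose_mat (Q1 @\<^sub>r Q2 @\<^sub>r Q3 @\<^sub>r Q4) * (Q1 @\<^sub>r Q2 @\<^sub>r Q3 @\<^sub>r Q4) = 1\<^sub>m l"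
    and orth2: "(Q1 @\<^sub>r Q2 @\<^sub>r Q3 @\<^sub>r Q4) * transpose_mat (Q1 @\<^sub>r Q2 @\<^sub>r Q3 @\<^sub>r Q4) = 1\<^sub>m l"
    and LQ: "Wp @\<^sub>r Uf @\<^sub>r Yf =
       (four_block_mat L11 (0\<^sub>m n1 (n2 + n3)) (L21 @\<^sub>r L31) (four_block_mat L22 (0\<^sub>m n2 n3) L32 L33))
       * (Q1 @\<^sub>r Q2 @\<^sub>r Q3)"
begin

abbreviation "Q \<equiv> Q1 @\<^sub>r Q2 @\<^sub>r Q3 @\<^sub>r Q4"
abbreviation "Q12 \<equiv> Q1 @\<^sub>r Q2"
abbreviation "Q34 \<equiv> Q3 @\<^sub>r Q4"

lemma Q12: "Q12 \<in> carrier_mat (n1 + n2) l" and Q34: "Q34 \<in> carrier_mat (n3 + n4) l"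
  using Q1 Q2 Q3 Q4 by auto

lemma Q_eq_append_rows: "Q = Q12 @\<^sub>r Q34"
  using append_rows_assoc[OF Q1 Q2 Q34] ..

lemma row_count: "n1 + n2 + n3 + n4 = l"
  using arg_cong[OF orth2, of dim_row] Q1 Q2 Q3 Q4 by simp

lemma Q: "Q \<in> carrier_mat l l"
  using Q1 Q2 Q3 Q4 row_count by (metis carrier_append_rows add.assoc)

lemma orthonormal_rows: "Q12 * transpose_mat Q12 = 1\<^sub>m (n1 + n2)" "Q34 * transpose_mat Q34 = 1\<^sub>m (n3 + n4)"
  using append_rows_orthonormal_rowsD[OF Q12 Q34] orth2 row_count
  unfolding Q_eq_append_rows by (simp_all add: add.assoc)

lemma data_blocks: "Wp = L11 * Q1" "Uf = L21 * Q1 + L22 * Q2" "Yf = L31 * Q1 + L32 * Q2 + L33 * Q3"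
proof -
  have "Wp @\<^sub>r Uf @\<^sub>r Yf = L11 * Q1 @\<^sub>r (L21 * Q1 + L22 * Q2) @\<^sub>r (L31 * Q1 + (L32 * Q2 + L33 * Q3))"
    unfolding LQ
    using L11 L21 L22 L31 L32 L33 Q1 Q2 Q3
    by (simp add: lower_four_block_mult_append_rows[of _ n1 n1 _ "n2 + n3" _ "n2 + n3" _ l]
        lower_four_block_mult_append_rows[of _ n2 n2 _ n3 _ n3 _ l]
        append_rows_mult[of _ n2 n1 _ n3 _ l] add_append_rows[of _ n2 l _ n3])
  then show "Wp = L11 * Q1" "Uf = L21 * Q1 + L22 * Q2" "Yf = L31 * Q1 + L32 * Q2 + L33 * Q3"
    using Wp Uf Yf L11 L21 L22 L31 L32 L33 Q1 Q2 Q3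
    by (simp_all add: append_rows_eq_iff[of _ n1 l _ _ "n2 + n3"] append_rows_eq_iff[of _ n2 l _ _ n3]
        assoc_add_mat[of _ n3 l])
qed

lemma pinv_mult_self: "pinv (Wp @\<^sub>r Uf) * (Wp @\<^sub>r Uf) = transpose_mat Q12 * Q12"
proof -
  let ?L = "four_block_mat L11 (0\<^sub>m n1 n2) L21 L22"
  have L: "?L \<in> carrier_mat (n1 + n2) (n1 + n2)"
    using L11 L22 by auto
  have "det ?L = det L11 * det L22"
    using L11 L21 L22 by (intro det_four_block_mat_upper_right_zero) auto
  then have "det ?L \<noteq> 0"
    using invertible_mat_det_nonzero L11 inv11 L22 inv22 by simp
  moreover have "Wp @\<^sub>r Uf = ?L * Q12"
    using L11 L21 L22 Q1 Q2 by (simp add: lower_four_block_mult_append_rows data_blocks)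
  ultimately show ?thesis
    using pinv_mult_self_of_orthonormal_rows[OF L _ Q12 orthonormal_rows(1)] by simp
qed

lemma sqnorm_proj_perp:
  assumes a: "a \<in> carrier_vec l"
  shows "sqnorm ((1\<^sub>m l - pinv (Wp @\<^sub>r Uf) * (Wp @\<^sub>r Uf)) *\<^sub>v a) = sqnorm (Q3 *\<^sub>v a) + sqnorm (Q4 *\<^sub>v a)"
proof -
  let ?x = "transpose_mat Q12 *\<^sub>v (Q12 *\<^sub>v a)" and ?y = "transpose_mat Q34 *\<^sub>v (Q34 *\<^sub>v a)"
  have "a = transpose_mat Q *\<^sub>v (Q *\<^sub>v a)"
    using assoc_mult_mat_vec[of "transpose_mat Q" l l Q l a] orth1 Q a by simp
  also have "\<dots> = ?x + ?y"
    unfolding Q_eq_append_rows mat_mult_append[OF Q12 Q34 a] using Q12 Q34 a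
    by (intro transpose_append_rows_mult_vec) auto
  finally have split: "a = ?x + ?y" .
  have "(1\<^sub>m l - transpose_mat Q12 * Q12) *\<^sub>v a = a - ?x"
    using Q12 a by (simp add: minus_mult_distrib_mat_vec[of _ l l] assoc_mult_mat_vec[of _ l "n1 + n2" Q12 l])
  also have "\<dots> = ?y"
  proof (rule eq_vecI)
    fix i assume "i < dim_vec ?y"
    then show "(a - ?x) $ i = ?y $ i"
      using arg_cong[OF split, of "\<lambda>v. v $ i"] Q1 Q3 a by simp
  qed (use Q1 Q3 in simp)
  finally have "(1\<^sub>m l - transpose_mat Q12 * Q12) *\<^sub>v a = ?y" .
  then have "sqnorm ((1\<^sub>m l - pinv (Wp @\<^sub>r Uf) * (Wp @\<^sub>r Uf)) *\<^sub>v a) = sqnorm (Q34 *\<^sub>v a)"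
    using sqnorm_transpose_mult_vec[OF Q34 orthonormal_rows(2)] Q34 a by (simp add: pinv_mult_self)
  then show ?thesis
    using mat_mult_append[OF Q3 Q4 a] Q3 Q4 a by (simp add: sqnorm_append[of _ n3 _ n4])
qed

lemma data_mult_vec_eq_iff:
  assumes a: "a \<in> carrier_vec l" and \<xi>: "\<xi> \<in> carrier_vec n1" and u: "u \<in> carrier_vec n2"
  shows "\<xi> @\<^sub>v u @\<^sub>v y = (Wp @\<^sub>r Uf @\<^sub>r Yf) *\<^sub>v a \<longleftrightarrow>
    \<xi> = L11 *\<^sub>v (Q1 *\<^sub>v a) \<and> u = L21 *\<^sub>v (Q1 *\<^sub>v a) + L22 *\<^sub>v (Q2 *\<^sub>v a) \<and>
    y = L31 *\<^sub>v (Q1 *\<^sub>v a) + L32 *\<^sub>v (Q2 *\<^sub>v a) + L33 *\<^sub>v (Q3 *\<^sub>v a)"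
proof -
  have "(Wp @\<^sub>r Uf @\<^sub>r Yf) *\<^sub>v a = (Wp *\<^sub>v a) @\<^sub>v (Uf *\<^sub>v a) @\<^sub>v (Yf *\<^sub>v a)"
    using Wp Uf Yf a by (simp add: mat_mult_append[of _ n1 l _ "n2 + n3"] mat_mult_append[of _ n2 l _ n3])
  moreover have "Wp *\<^sub>v a \<in> carrier_vec n1" "Uf *\<^sub>v a \<in> carrier_vec n2"
    using Wp Uf a by auto
  ultimately show ?thesis
    using \<xi> u a L11 L21 L22 L31 L32 L33 Q1 Q2 Q3
    by (simp add: data_blocks add_mult_distrib_mat_vec[of _ n2 l] add_mult_distrib_mat_vec[of _ n3 l])
qed

lemma coordinates_transpose_mult_vec:
  assumes g: "g1 \<in> carrier_vec n1" "g2 \<in> carrier_vec n2" "g3 \<in> carrier_vec n3" "g4 \<in> carrier_vec n4"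
  defines "a \<equiv> transpose_mat Q *\<^sub>v (g1 @\<^sub>v g2 @\<^sub>v g3 @\<^sub>v g4)"
  shows "a \<in> carrier_vec l" "Q1 *\<^sub>v a = g1" "Q2 *\<^sub>v a = g2" "Q3 *\<^sub>v a = g3" "Q4 *\<^sub>v a = g4"
proof -
  have g_carrier: "g1 @\<^sub>v g2 @\<^sub>v g3 @\<^sub>v g4 \<in> carrier_vec l"
    using g row_count by (metis append_carrier_vec add.assoc)
  show a: "a \<in> carrier_vec l"
    unfolding a_def using Q g_carrier by auto
  have "Q *\<^sub>v a = g1 @\<^sub>v g2 @\<^sub>v g3 @\<^sub>v g4"
    unfolding a_def using assoc_mult_mat_vec[of Q l l "transpose_mat Q" l] orth2 g_carrier Q by simp
  moreover have "Q *\<^sub>v a = (Q1 *\<^sub>v a) @\<^sub>v (Q2 *\<^sub>v a) @\<^sub>v (Q3 *\<^sub>v a) @\<^sub>v (Q4 *\<^sub>v a)"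
    using Q1 Q2 Q3 Q4 a
    by (simp add: mat_mult_append[of _ n1 l _ "n2 + (n3 + n4)"] mat_mult_append[of _ n2 l _ "n3 + n4"]
        mat_mult_append[of _ n3 l _ n4])
  ultimately show "Q1 *\<^sub>v a = g1" "Q2 *\<^sub>v a = g2" "Q3 *\<^sub>v a = g3" "Q4 *\<^sub>v a = g4"
    using Q1 Q2 Q3 a g by (simp_all add: append_vec_eq[of _ n1] append_vec_eq[of _ n2] append_vec_eq[of _ n3])
qed

lemma deepc_feasible_coordinates:
  assumes a: "a \<in> carrier_vec l" and \<xi>: "\<xi> \<in> carrier_vec n1" and u: "u \<in> carrier_vec n2"
    and data: "\<xi> @\<^sub>v u @\<^sub>v y = (Wp @\<^sub>r Uf @\<^sub>r Yf) *\<^sub>v a"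
  shows "u = L21 *\<^sub>v (inv_mat L11 *\<^sub>v \<xi>) + L22 *\<^sub>v (Q2 *\<^sub>v a)"
    "y = L31 *\<^sub>v (inv_mat L11 *\<^sub>v \<xi>) + L32 *\<^sub>v (Q2 *\<^sub>v a) + L33 *\<^sub>v (Q3 *\<^sub>v a)"
proof -
  have "inv_mat L11 *\<^sub>v \<xi> = Q1 *\<^sub>v a"
    using data_mult_vec_eq_iff[OF a \<xi> u] data inv_mat_inverse[OF L11 inv11] L11 Q1 a
    by (auto simp flip: assoc_mult_mat_vec[of _ n1 n1 _ n1])
  then show "u = L21 *\<^sub>v (inv_mat L11 *\<^sub>v \<xi>) + L22 *\<^sub>v (Q2 *\<^sub>v a)"
    "y = L31 *\<^sub>v (inv_mat L11 *\<^sub>v \<xi>) + L32 *\<^sub>v (Q2 *\<^sub>v a) + L33 *\<^sub>v (Q3 *\<^sub>v a)"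
    using data_mult_vec_eq_iff[OF a \<xi> u] data by auto
qed

lemma gddpc_feasible_realization:
  assumes \<xi>: "\<xi> \<in> carrier_vec n1" and \<gamma>2: "\<gamma>2 \<in> carrier_vec n2" and \<gamma>3: "\<gamma>3 \<in> carrier_vec n3"
  obtains a where "a \<in> carrier_vec l"
    and "\<xi> @\<^sub>v (L21 *\<^sub>v (inv_mat L11 *\<^sub>v \<xi>) + L22 *\<^sub>v \<gamma>2)
        @\<^sub>v (L31 *\<^sub>v (inv_mat L11 *\<^sub>v \<xi>) + L32 *\<^sub>v \<gamma>2 + L33 *\<^sub>v \<gamma>3) = (Wp @\<^sub>r Uf @\<^sub>r Yf) *\<^sub>v a"
    and "sqnorm ((1\<^sub>m l - pinv (Wp @\<^sub>r Uf) * (Wp @\<^sub>r Uf)) *\<^sub>v a) = sqnorm \<gamma>3"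
proof -
  let ?\<gamma>1 = "inv_mat L11 *\<^sub>v \<xi>"
  have \<gamma>1: "?\<gamma>1 \<in> carrier_vec n1" and L11_\<gamma>1: "L11 *\<^sub>v ?\<gamma>1 = \<xi>"
    using inv_mat_inverse[OF L11 inv11] L11 \<xi> by (auto simp flip: assoc_mult_mat_vec[of _ n1 n1 _ n1])
  define a where "a = transpose_mat Q *\<^sub>v (?\<gamma>1 @\<^sub>v \<gamma>2 @\<^sub>v \<gamma>3 @\<^sub>v 0\<^sub>v n4)"
  note coords = coordinates_transpose_mult_vec[OF \<gamma>1 \<gamma>2 \<gamma>3 zero_carrier_vec, folded a_def]
  have "\<xi> @\<^sub>v (L21 *\<^sub>v ?\<gamma>1 + L22 *\<^sub>v \<gamma>2) @\<^sub>v (L31 *\<^sub>v ?\<gamma>1 + L32 *\<^sub>v \<gamma>2 + L33 *\<^sub>v \<gamma>3)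
      = (Wp @\<^sub>r Uf @\<^sub>r Yf) *\<^sub>v a"
    using data_mult_vec_eq_iff[OF coords(1) \<xi>] coords L11_\<gamma>1 \<gamma>1 \<gamma>2 L21 L22 by simp
  moreover have "sqnorm ((1\<^sub>m l - pinv (Wp @\<^sub>r Uf) * (Wp @\<^sub>r Uf)) *\<^sub>v a) = sqnorm \<gamma>3"
    using sqnorm_proj_perp[OF coords(1)] coords by (simp add: sqnorm_def)
  ultimately show ?thesis
    using that coords(1) by blast
qed

theorem deepc_eq_gddpc:
  assumes lam: "0 \<le> lam" and \<xi>: "\<xi> \<in> carrier_vec n1"
  shows "deepc_opt_io (Wp @\<^sub>r Uf @\<^sub>r Yf) n2 n3 J
      (\<lambda>a. lam * sqnorm ((1\<^sub>m l - pinv (Wp @\<^sub>r Uf) * (Wp @\<^sub>r Uf)) *\<^sub>v a)) UU YY \<xi>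
    = gddpc_opt_io L11 L21 L22 L31 L32 L33 J (\<lambda>\<gamma>1 \<gamma>2 \<gamma>3. lam * sqnorm \<gamma>3) UU YY \<xi>"
proof -
  have dims: "dim_col (Wp @\<^sub>r Uf @\<^sub>r Yf) = l" "dim_col L22 = n2" "dim_col L33 = n3"
    using Wp L22 L33 by auto
  show ?thesis
    unfolding deepc_opt_io_def gddpc_opt_io_def Let_def dims
  proof (rule opt_io_eqI, goal_cases)
    case (1 u y a)
    then have a: "a \<in> carrier_vec l" and u: "u \<in> carrier_vec n2"
      and data: "\<xi> @\<^sub>v u @\<^sub>v y = (Wp @\<^sub>r Uf @\<^sub>r Yf) *\<^sub>v a"
      by auto
    have "lam * sqnorm (Q3 *\<^sub>v a) \<le> lam * sqnorm ((1\<^sub>m l - pinv (Wp @\<^sub>r Uf) * (Wp @\<^sub>r Uf)) *\<^sub>v a)"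
      unfolding sqnorm_proj_perp[OF a] using lam sqnorm_nonneg by (simp add: mult_left_mono)
    then show ?case
      using 1 deepc_feasible_coordinates[OF a \<xi> u data] Q2 Q3 a
      by (intro exI[of _ "(Q2 *\<^sub>v a, Q3 *\<^sub>v a)"]) auto
  next
    case (2 u y z)
    then obtain \<gamma>2 \<gamma>3 where z: "z = (\<gamma>2, \<gamma>3)" and \<gamma>2: "\<gamma>2 \<in> carrier_vec n2" and \<gamma>3: "\<gamma>3 \<in> carrier_vec n3"
      by auto
    show ?case
      by (rule gddpc_feasible_realization[OF \<xi> \<gamma>2 \<gamma>3])
        (use 2 z \<gamma>2 \<gamma>3 \<xi> inv_mat_inverse(1)[OF L11 inv11] L21 L22 L31 L32 L33 in auto)
  qed
qed

end

theorem proposition4: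
  fixes n1 n2 n3 l :: nat
    and Wp Uf Yf L11 L21 L22 L31 L32 L33 Q1 Q2 Q3 Q4 :: "real mat"
    and lam :: real
    and J :: "real vec \<Rightarrow> real vec \<Rightarrow> real vec \<Rightarrow> real"
    and UU YY :: "real vec set"
  assumes Wp: "Wp \<in> carrier_mat n1 l" and Uf: "Uf \<in> carrier_mat n2 l" and Yf: "Yf \<in> carrier_mat n3 l"
    and rank: "full_row_rank (Wp @\<^sub>r Uf @\<^sub>r Yf)"
    and L11: "L11 \<in> carrier_mat n1 n1" and L21: "L21 \<in> carrier_mat n2 n1" and L22: "L22 \<in> carrier_mat n2 n2"
    and L31: "L31 \<in> carrier_mat n3 n1" and L32: "L32 \<in> carrier_mat n3 n2" and L33: "L33 \<in> carrier_mat n3 n3"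
    and inv11: "invertible_mat L11" and inv22: "invertible_mat L22" and inv33: "invertible_mat L33"
    and Q1: "Q1 \<in> carrier_mat n1 l" and Q2: "Q2 \<in> carrier_mat n2 l" and Q3: "Q3 \<in> carrier_mat n3 l"
    and Q4: "Q4 \<in> carrier_mat (l - (n1 + n2 + n3)) l"
    and orth1: "transpose_mat (Q1 @\<^sub>r Q2 @\<^sub>r Q3 @\<^sub>r Q4) * (Q1 @\<^sub>r Q2 @\<^sub>r Q3 @\<^sub>r Q4) = 1\<^sub>m l"
    and orth2: "(Q1 @\<^sub>r Q2 @\<^sub>r Q3 @\<^sub>r Q4) * transpose_mat (Q1 @\<^sub>r Q2 @\<^sub>r Q3 @\<^sub>r Q4) = 1\<^sub>m l"
    and LQ: "Wp @\<^sub>r Uf @\<^sub>r Yf =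
       (four_block_mat L11 (0\<^sub>m n1 (n2 + n3)) (L21 @\<^sub>r L31) (four_block_mat L22 (0\<^sub>m n2 n3) L32 L33))
       * (Q1 @\<^sub>r Q2 @\<^sub>r Q3)"
    and lam: "lam > 0"
  shows "\<forall>\<xi> \<in> carrier_vec n1.
     deepc_opt_io (Wp @\<^sub>r Uf @\<^sub>r Yf) n2 n3 J
        (\<lambda>a. lam * sqnorm ((1\<^sub>m l - pinv (Wp @\<^sub>r Uf) * (Wp @\<^sub>r Uf)) *\<^sub>v a)) UU YY \<xi>
   = gddpc_opt_io L11 L21 L22 L31 L32 L33 J (\<lambda>\<gamma>1 \<gamma>2 \<gamma>3. lam * sqnorm \<gamma>3) UU YY \<xi>"
proof -
  interpret lq_factorization n1 n2 n3 "l - (n1 + n2 + n3)" l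
    Wp Uf Yf L11 L21 L22 L31 L32 L33 Q1 Q2 Q3 Q4
    using Wp Uf Yf L11 L21 L22 L31 L32 L33 inv11 inv22 Q1 Q2 Q3 Q4 orth1 orth2 LQ
    by unfold_locales
  show ?thesis
    using deepc_eq_gddpc lam by simp
qed

end
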